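(* Let $n,m\ge1$ be integers, $\theta\in[0,2\pi)$ and $0\le w<\pi/2$. Then no non-zero positive RP-measure on $\mathbb{T}^2$ has support contained in $$S_{m,n}=\{\Phi(v_1,-v_2): (v_1,v_2)\in\mathbb{R}^2,\ e^{i(nv_1+mv_2)}=e^{i\omega}\text{ for some }\omega\in[\theta-w,\theta+w]\}.$$ In particular, no non-zero positive RP-measure has support contained in $\{\Phi(v_1,nv_1-\omega): v_1\in[0,2\pi),\ \omega\in[\theta-w,\theta+w]\}$.
   Context: $\Phi:\mathbb{R}^2\to\mathbb{T}^2$, $\Phi(x_1,x_2)=(e^{ix_1},e^{ix_2})$. RP-measures on $\mathbb{T}^2$: real Borel measures $\mu$ of bounded variation on $\mathbb{T}^2$ whose Poisson integral $P[d\mu](z)=\int_{\mathbb{T}^2}\prod_{j=1}^2\frac{1-|z_j|^2}{|\zeta_j-z_j|^2}\,d\mu(\zeta)$ is the real part of a holomorphic function on $\mathbb{D}^2$. *)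

theory Defs
  imports "HOL-Analysis.Analysis"
begin

definition Phi :: "real \<times> real \<Rightarrow> complex \<times> complex" where
  "Phi x = (exp (\<i> * complex_of_real (fst x)), exp (\<i> * complex_of_real (snd x)))"

definition torus2 :: "(complex \<times> complex) set" where
  "torus2 = {z. cmod (fst z) = 1 \<and> cmod (snd z) = 1}"

definition bidisc :: "(complex \<times> complex) set" where
  "bidisc = {z. cmod (fst z) < 1 \<and> cmod (snd z) < 1}"

definition holomorphic2_on :: "(complex \<times> complex \<Rightarrow> complex) \<Rightarrow> (complex \<times> complex) set \<Rightarrow> bool" where
  "holomorphic2_on f S \<longleftrightarrow>
     (\<forall>z\<in>S. \<exists>L. (f has_derivative L) (at z) \<and>
        (\<forall>c a b. L (c * a, c * b) = c * L (a, b)))"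

definition poisson_kernel2 :: "complex \<times> complex \<Rightarrow> complex \<times> complex \<Rightarrow> real" where
  "poisson_kernel2 z \<zeta> =
     (1 - (cmod (fst z))\<^sup>2) / (cmod (fst \<zeta> - fst z))\<^sup>2 *
     ((1 - (cmod (snd z))\<^sup>2) / (cmod (snd \<zeta> - snd z))\<^sup>2)"

definition poisson_integral2 :: "(complex \<times> complex) measure \<Rightarrow> complex \<times> complex \<Rightarrow> real" where
  "poisson_integral2 M z = (\<integral>\<zeta>. poisson_kernel2 z \<zeta> \<partial>M)"

definition pos_RP_measure :: "(complex \<times> complex) measure \<Rightarrow> bool" where
  "pos_RP_measure M \<longleftrightarrow>
     sets M = sets borel \<and> finite_measure M \<and> emeasure M (- torus2) = 0 \<and>
     (\<exists>f. holomorphic2_on f bidisc \<and> (\<forall>z\<in>bidisc. poisson_integral2 M z = Re (f z)))"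

definition measure_support :: "(complex \<times> complex) measure \<Rightarrow> (complex \<times> complex) set" where
  "measure_support M = {x. \<forall>U. open U \<and> x \<in> U \<longrightarrow> emeasure M U \<noteq> 0}"

definition S_set :: "int \<Rightarrow> int \<Rightarrow> real \<Rightarrow> real \<Rightarrow> (complex \<times> complex) set" where
  "S_set n m \<theta> w = {Phi (v1, - v2) | v1 v2. \<exists>\<omega>\<in>{\<theta> - w .. \<theta> + w}.
      exp (\<i> * complex_of_real (of_int n * v1 + of_int m * v2)) = exp (\<i> * complex_of_real \<omega>)}"

definition S'_set :: "int \<Rightarrow> real \<Rightarrow> real \<Rightarrow> (complex \<times> complex) set" where
  "S'_set n \<theta> w = {Phi (v1, of_int n * v1 - \<omega>) | v1 \<omega>. v1 \<in> {0..<2*pi} \<and> \<omega> \<in> {\<theta> - w .. \<theta> + w}}"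

end

theory Submission
  imports Defs "HOL-Complex_Analysis.Complex_Analysis"
begin

text \<open>
  Let \<open>\<mu>\<close> be a positive RP-measure, so \<open>P[\<mu>] = Re f\<close> with \<open>f\<close> holomorphic on the bidisc.
  Restricted to the torus of radius 1/2, where the Poisson kernel is bounded, \<open>P[\<mu>]\<close> has
  vanishing Fourier coefficients of mixed sign \<open>(-n, m)\<close>: such a coefficient is the mean of the
  corresponding coefficients of \<open>f\<close> and of \<open>cnj f\<close>, and each of these is killed by the mean
  value property in one of the two variables. By Fubini the same coefficient is \<open>2^-(n+m)\<close>
  times the moment \<open>\<integral> cnj u ^ n * v ^ m d\<mu>(u, v)\<close>, which therefore vanishes. On
  \<open>S_set n m \<theta> w\<close>, however, \<open>cnj u ^ n * v ^ m = e^(-i\<omega>)\<close> with \<open>|\<omega> - \<theta>| \<le> w < pi/2\<close>, so the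
  real part of \<open>e^(i\<theta>) cnj u ^ n * v ^ m\<close> is at least \<open>cos w > 0\<close> there, and a measure supported
  in that set has no mass. Finally \<open>S'_set n \<theta> w \<subseteq> S_set n 1 \<theta> w\<close>.
\<close>

definition unit_interval_measure :: "real measure" where
  "unit_interval_measure = density lborel (\<lambda>x. ennreal (indicator {0..1} x))"

definition cis_turn :: "real \<Rightarrow> complex" where
  "cis_turn t = exp (2 * of_real pi * \<i> * of_real t)"

definition half_circle :: "real \<Rightarrow> complex" where
  "half_circle = circlepath 0 (1/2)"

lemma sets_unit_interval_measure [simp, measurable_cong]: "sets unit_interval_measure = sets borel"
  by (simp add: unit_interval_measure_def)

interpretation unit_interval: finite_measure unit_interval_measure
  by (rule finite_measureI) (simp add: unit_interval_measure_def emeasure_density ennreal_indicator)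

lemma
  fixes F :: "real \<Rightarrow> complex"
  assumes "continuous_on UNIV F"
  shows integrable_unit_interval_continuous: "integrable unit_interval_measure F"
    and integral_unit_interval_continuous: "integral\<^sup>L unit_interval_measure F = integral {0..1} F"
proof -
  have meas: "F \<in> borel_measurable borel"
    using assms by (rule borel_measurable_continuous_onI)
  have int: "integrable lborel (\<lambda>x. indicator {0..1} x *\<^sub>R F x)"
    by (rule borel_integrable_compact) (auto intro: continuous_on_subset[OF assms])
  show "integrable unit_interval_measure F"
    unfolding unit_interval_measure_def using meas int
    by (subst integrable_density) (auto simp: ennreal_indicator)
  have "integral\<^sup>L unit_interval_measure F = (LINT x:{0..1}|lborel. F x)"
    unfolding unit_interval_measure_def set_lebesgue_integral_def using meas
    by (subst integral_density) (auto simp: ennreal_indicator)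
  also have "\<dots> = integral {0..1} F"
    using int by (intro set_borel_integral_eq_integral) (simp add: set_integrable_def)
  finally show "integral\<^sup>L unit_interval_measure F = integral {0..1} F" .
qed

lemma half_circle_eq: "half_circle t = cis_turn t / 2"
  by (simp add: half_circle_def cis_turn_def circlepath)

lemma norm_cis_turn [simp]: "norm (cis_turn t) = 1"
  by (simp add: cis_turn_def)

lemma norm_half_circle [simp]: "norm (half_circle t) = 1/2"
  by (simp add: half_circle_eq norm_divide)

lemma cnj_cis_turn_mult [simp]: "cnj (cis_turn t) * cis_turn t = 1"
  using complex_norm_square[of "cis_turn t"] by (simp add: mult.commute)

lemma continuous_on_cis_turn [continuous_intros]:
  "continuous_on S f \<Longrightarrow> continuous_on S (\<lambda>x. cis_turn (f x))"
  unfolding cis_turn_def by (intro continuous_intros)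

lemma continuous_on_half_circle [continuous_intros]:
  "continuous_on S f \<Longrightarrow> continuous_on S (\<lambda>x. half_circle (f x))"
  unfolding half_circle_eq by (intro continuous_intros) auto

lemma continuous_on_comp_half_circle:
  "continuous_on (ball 0 1) g \<Longrightarrow> continuous_on UNIV (\<lambda>t. g (half_circle t))"
  by (rule continuous_on_compose2[of _ g]) (auto intro: continuous_on_half_circle continuous_on_id)

lemma mean_value_half_circle:
  assumes "g holomorphic_on ball 0 1"
  shows "integral\<^sup>L unit_interval_measure (\<lambda>t. g (half_circle t)) = g 0"
proof -
  have cont: "continuous_on (ball 0 1) g"
    using assms holomorphic_on_imp_continuous_on by blast
  have "((\<lambda>u. g u / (u - 0)) has_contour_integral (2 * of_real pi * \<i> * g 0)) (circlepath 0 (1/2))"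
    by (intro Cauchy_integral_circlepath continuous_on_subset[OF cont]
        holomorphic_on_subset[OF assms]) auto
  hence cauchy: "((\<lambda>t. g (half_circle t) / half_circle t * vector_derivative half_circle (at t within {0..1}))
           has_integral (2 * of_real pi * \<i> * g 0)) {0..1}"
    by (simp add: has_contour_integral_def half_circle_def)
  have scaled: "((\<lambda>t. 2 * of_real pi * \<i> * g (half_circle t)) has_integral (2 * of_real pi * \<i> * g 0)) {0..1}"
  proof (rule has_integral_spike_finite[OF finite.emptyI _ cauchy])
    fix t :: real assume "t \<in> {0..1} - {}"
    hence "vector_derivative half_circle (at t within {0..1}) = 2 * of_real pi * \<i> * half_circle t"
      using vector_derivative_circlepath01[of t 0 "1/2"] by (simp add: half_circle_def circlepath)
    moreover have "half_circle t \<noteq> 0"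
      using norm_half_circle[of t] by (metis norm_zero zero_neq_numeral divide_eq_0_iff one_neq_zero)
    ultimately show "2 * of_real pi * \<i> * g (half_circle t)
        = g (half_circle t) / half_circle t * vector_derivative half_circle (at t within {0..1})"
      by simp
  qed
  have "((\<lambda>t. g (half_circle t)) has_integral g 0) {0..1}"
    using has_integral_mult_right[OF scaled, of "inverse (2 * of_real pi * \<i>)"] by (simp add: field_simps)
  thus ?thesis
    by (simp add: integral_unit_interval_continuous continuous_on_comp_half_circle[OF cont] integral_unique)
qed

lemma integral_holomorphic_times_cis_turn_power:
  assumes "g holomorphic_on ball 0 1" and "n \<ge> 1"
  shows "integral\<^sup>L unit_interval_measure (\<lambda>t. g (half_circle t) * cis_turn t ^ n) = 0"
proof -
  have "(\<lambda>w. g w * (2 * w) ^ n) holomorphic_on ball 0 1"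
    by (intro holomorphic_intros assms(1))
  from mean_value_half_circle[OF this] assms(2) show ?thesis
    by (simp add: half_circle_eq)
qed

lemma integral_cnj_cis_turn_power:
  assumes "n \<ge> 1"
  shows "integral\<^sup>L unit_interval_measure (\<lambda>t. cnj (cis_turn t) ^ n) = 0"
  using integral_holomorphic_times_cis_turn_power[of "\<lambda>_. 1" n] assms
    Bochner_Integration.integral_cnj[of unit_interval_measure "\<lambda>t. cis_turn t ^ n"]
  by simp

definition cauchy_kernel :: "complex \<Rightarrow> complex \<Rightarrow> complex" where
  "cauchy_kernel \<zeta> w = \<zeta> / (\<zeta> - w)"

lemma holomorphic_on_cauchy_kernel:
  assumes "norm \<zeta> = 1"
  shows "cauchy_kernel \<zeta> holomorphic_on ball 0 1"
  unfolding cauchy_kernel_def using assms by (intro holomorphic_intros) auto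

lemma continuous_on_cauchy_kernel_half_circle:
  "norm \<zeta> = 1 \<Longrightarrow> continuous_on UNIV (\<lambda>t. cauchy_kernel \<zeta> (half_circle t))"
  by (intro continuous_on_comp_half_circle holomorphic_on_imp_continuous_on holomorphic_on_cauchy_kernel)

text \<open>The induction step is the identity \<open>K(w) = 1 + (w/\<zeta>) K(w)\<close> for the Cauchy kernel
  \<open>K\<close>, i.e. one more term of its geometric series.\<close>
lemma integral_cauchy_kernel_cnj_cis_turn_power:
  assumes "norm \<zeta> = 1"
  shows "integral\<^sup>L unit_interval_measure (\<lambda>t. cauchy_kernel \<zeta> (half_circle t) * cnj (cis_turn t) ^ n)
           = (1/2) ^ n * cnj \<zeta> ^ n"
proof (induction n)
  case 0
  have "\<zeta> \<noteq> 0" using assms by auto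
  with mean_value_half_circle[OF holomorphic_on_cauchy_kernel[OF assms]] show ?case
    by (simp add: cauchy_kernel_def)
next
  case (Suc n)
  have step: "cauchy_kernel \<zeta> (half_circle t) * cnj (cis_turn t) ^ Suc n
      = cnj (cis_turn t) ^ Suc n + cnj \<zeta> / 2 * (cauchy_kernel \<zeta> (half_circle t) * cnj (cis_turn t) ^ n)" for t
  proof -
    have "\<zeta> \<noteq> half_circle t" using assms norm_half_circle[of t] by auto
    moreover have "cnj \<zeta> * \<zeta> = 1" using assms complex_norm_square[of \<zeta>] by (simp add: mult.commute)
    moreover note cnj_cis_turn_mult[of t]
    ultimately show ?thesis
      by (simp add: cauchy_kernel_def half_circle_eq field_simps)
  qed
  have "integrable unit_interval_measure (\<lambda>t. cauchy_kernel \<zeta> (half_circle t) * cnj (cis_turn t) ^ n)"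
       "integrable unit_interval_measure (\<lambda>t. cnj (cis_turn t) ^ Suc n)"
    by (intro integrable_unit_interval_continuous continuous_intros
        continuous_on_cauchy_kernel_half_circle assms continuous_on_id)+
  hence "integral\<^sup>L unit_interval_measure (\<lambda>t. cauchy_kernel \<zeta> (half_circle t) * cnj (cis_turn t) ^ Suc n)
      = integral\<^sup>L unit_interval_measure (\<lambda>t. cnj (cis_turn t) ^ Suc n)
        + cnj \<zeta> / 2 * integral\<^sup>L unit_interval_measure (\<lambda>t. cauchy_kernel \<zeta> (half_circle t) * cnj (cis_turn t) ^ n)"
    by (simp only: step) (simp del: power_Suc)
  with Suc.IH integral_cnj_cis_turn_power[of "Suc n"] show ?case
    by simp
qed

definition disc_poisson_kernel :: "complex \<Rightarrow> complex \<Rightarrow> real" where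
  "disc_poisson_kernel z \<zeta> = (1 - (cmod z)\<^sup>2) / (cmod (\<zeta> - z))\<^sup>2"

lemma poisson_kernel2_eq:
  "poisson_kernel2 z \<zeta> = disc_poisson_kernel (fst z) (fst \<zeta>) * disc_poisson_kernel (snd z) (snd \<zeta>)"
  by (simp add: poisson_kernel2_def disc_poisson_kernel_def)

lemma disc_poisson_kernel_eq_cauchy_kernel:
  assumes "norm \<zeta> = 1" and "z \<noteq> \<zeta>"
  shows "complex_of_real (disc_poisson_kernel z \<zeta>) = cauchy_kernel \<zeta> z + cnj (cauchy_kernel \<zeta> z) - 1"
proof -
  have "\<zeta> - z \<noteq> 0" "cnj \<zeta> - cnj z \<noteq> 0" "(\<zeta> - z) * (cnj \<zeta> - cnj z) \<noteq> 0"
    using assms(2) by (auto simp flip: complex_cnj_diff)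
  moreover have "\<zeta> * cnj \<zeta> = 1"
    using complex_norm_square[of \<zeta>] assms(1) by simp
  ultimately show ?thesis
    unfolding disc_poisson_kernel_def cauchy_kernel_def of_real_divide of_real_diff of_real_1
      complex_norm_square complex_cnj_diff complex_cnj_divide
    by (simp add: field_simps)
qed

lemma integral_disc_poisson_kernel_cnj_cis_turn_power:
  assumes "norm \<zeta> = 1" and "n \<ge> 1"
  shows "integral\<^sup>L unit_interval_measure
           (\<lambda>t. complex_of_real (disc_poisson_kernel (half_circle t) \<zeta>) * cnj (cis_turn t) ^ n)
         = (1/2) ^ n * cnj \<zeta> ^ n"
proof -
  define K where "K t = cauchy_kernel \<zeta> (half_circle t)" for t
  have eq: "complex_of_real (disc_poisson_kernel (half_circle t) \<zeta>) * cnj (cis_turn t) ^ n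
      = K t * cnj (cis_turn t) ^ n + cnj (K t * cis_turn t ^ n) - cnj (cis_turn t) ^ n" for t
  proof -
    have "half_circle t \<noteq> \<zeta>" using assms(1) norm_half_circle[of t] by auto
    thus ?thesis
      by (simp add: disc_poisson_kernel_eq_cauchy_kernel[OF assms(1)] K_def algebra_simps)
  qed
  have cont: "continuous_on UNIV K"
    unfolding K_def by (rule continuous_on_cauchy_kernel_half_circle[OF assms(1)])
  have "integral\<^sup>L unit_interval_measure (\<lambda>t. cnj (K t * cis_turn t ^ n)) = 0"
    using integral_holomorphic_times_cis_turn_power[OF holomorphic_on_cauchy_kernel[OF assms(1)] assms(2)]
    by (simp add: K_def del: complex_cnj_mult complex_cnj_power)
  moreover have "integrable unit_interval_measure (\<lambda>t. K t * cnj (cis_turn t) ^ n)"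
    "integrable unit_interval_measure (\<lambda>t. cnj (K t * cis_turn t ^ n))"
    "integrable unit_interval_measure (\<lambda>t. cnj (cis_turn t) ^ n)"
    by (intro integrable_unit_interval_continuous continuous_intros cont continuous_on_id)+
  ultimately show ?thesis
    using integral_cauchy_kernel_cnj_cis_turn_power[OF assms(1), of n] integral_cnj_cis_turn_power[OF assms(2)]
    by (simp add: eq K_def del: complex_cnj_mult complex_cnj_power)
qed

lemma integral_disc_poisson_kernel_cis_turn_power:
  assumes "norm \<zeta> = 1" and "n \<ge> 1"
  shows "integral\<^sup>L unit_interval_measure
           (\<lambda>t. complex_of_real (disc_poisson_kernel (half_circle t) \<zeta>) * cis_turn t ^ n)
         = (1/2) ^ n * \<zeta> ^ n"
  using Bochner_Integration.integral_cnj[of unit_interval_measure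
      "\<lambda>t. complex_of_real (disc_poisson_kernel (half_circle t) \<zeta>) * cnj (cis_turn t) ^ n"]
    integral_disc_poisson_kernel_cnj_cis_turn_power[OF assms]
  by simp

lemma disc_poisson_kernel_bounds:
  assumes "norm \<zeta> = 1" and "norm z = 1/2"
  shows "0 \<le> disc_poisson_kernel z \<zeta>" and "disc_poisson_kernel z \<zeta> \<le> 3"
proof -
  have "1/2 \<le> cmod (\<zeta> - z)"
    using norm_triangle_ineq2[of \<zeta> z] assms by simp
  hence dist: "(1/2)\<^sup>2 \<le> (cmod (\<zeta> - z))\<^sup>2"
    by (rule power_mono) simp
  have num: "1 - (cmod z)\<^sup>2 = 3/4"
    unfolding assms(2) by (simp add: power2_eq_square)
  have "disc_poisson_kernel z \<zeta> \<le> 3/4 / (1/2)\<^sup>2"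
    unfolding disc_poisson_kernel_def num
    by (rule divide_left_mono[OF dist]) (use dist in \<open>auto intro!: mult_pos_pos\<close>)
  thus "disc_poisson_kernel z \<zeta> \<le> 3" by (simp add: power2_eq_square)
  show "0 \<le> disc_poisson_kernel z \<zeta>"
    unfolding disc_poisson_kernel_def num by simp
qed

lemma continuous_on_disc_poisson_kernel_half_circle:
  assumes "norm \<zeta> = 1"
  shows "continuous_on UNIV (\<lambda>t. disc_poisson_kernel (half_circle t) \<zeta>)"
proof -
  have "(cmod (\<zeta> - half_circle t))\<^sup>2 \<noteq> 0" for t
    using assms norm_half_circle[of t] by auto
  thus ?thesis
    unfolding disc_poisson_kernel_def by (intro continuous_intros continuous_on_id) auto
qed

abbreviation unit_square_measure :: "(real \<times> real) measure" where
  "unit_square_measure \<equiv> unit_interval_measure \<Otimes>\<^sub>M unit_interval_measure"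

definition half_torus :: "real \<times> real \<Rightarrow> complex \<times> complex" where
  "half_torus x = (half_circle (fst x), half_circle (snd x))"

definition char2 :: "nat \<Rightarrow> nat \<Rightarrow> real \<times> real \<Rightarrow> complex" where
  "char2 n m x = cnj (cis_turn (fst x)) ^ n * cis_turn (snd x) ^ m"

interpretation unit_square: pair_sigma_finite unit_interval_measure unit_interval_measure
  by unfold_locales

interpretation unit_square: finite_measure unit_square_measure
  by (intro finite_measure_pair_measure unit_interval.finite_measure_axioms)

lemma sets_pair_measure_borel:
  fixes A :: "'a::second_countable_topology measure" and B :: "'b::second_countable_topology measure"
  assumes "sets A = sets borel" and "sets B = sets borel"
  shows "sets (A \<Otimes>\<^sub>M B) = sets borel"
proof -
  have "sets (A \<Otimes>\<^sub>M B) = sets ((borel :: 'a measure) \<Otimes>\<^sub>M (borel :: 'b measure))"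
    using assms by (intro sets_pair_measure_cong)
  thus ?thesis by (simp only: borel_prod)
qed

lemma sets_unit_square_measure [simp, measurable_cong]: "sets unit_square_measure = sets borel"
  by (intro sets_pair_measure_borel sets_unit_interval_measure)

lemma continuous_on_half_torus [continuous_intros]:
  "continuous_on S f \<Longrightarrow> continuous_on S (\<lambda>x. half_torus (f x))"
  unfolding half_torus_def by (intro continuous_intros)

lemma continuous_on_char2 [continuous_intros]:
  "continuous_on S f \<Longrightarrow> continuous_on S (\<lambda>x. char2 n m (f x))"
  unfolding char2_def by (intro continuous_intros)

lemma norm_char2 [simp]: "norm (char2 n m x) = 1"
  by (simp add: char2_def norm_mult norm_power)

lemma half_torus_in_bidisc: "half_torus x \<in> bidisc"
  by (simp add: half_torus_def bidisc_def)

lemma integrable_unit_square_bounded_continuous: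
  fixes F :: "real \<times> real \<Rightarrow> complex"
  assumes "continuous_on UNIV F" and "\<And>x. norm (F x) \<le> B"
  shows "integrable unit_square_measure F"
proof (rule unit_square.integrable_const_bound[where B = B])
  show "F \<in> borel_measurable unit_square_measure"
    using borel_measurable_continuous_onI[OF assms(1)] by simp
qed (use assms(2) in auto)

lemma integral_poisson_kernel2_char2:
  assumes "\<zeta> \<in> torus2" and "n \<ge> 1" and "m \<ge> 1"
  shows "integral\<^sup>L unit_square_measure (\<lambda>x. complex_of_real (poisson_kernel2 (half_torus x) \<zeta>) * char2 n m x)
         = (1/2) ^ (n + m) * (cnj (fst \<zeta>) ^ n * snd \<zeta> ^ m)"
proof -
  have unit: "norm (fst \<zeta>) = 1" "norm (snd \<zeta>) = 1"
    using assms(1) by (auto simp: torus2_def)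
  define A where "A s = complex_of_real (disc_poisson_kernel (half_circle s) (fst \<zeta>)) * cnj (cis_turn s) ^ n" for s
  define B where "B t = complex_of_real (disc_poisson_kernel (half_circle t) (snd \<zeta>)) * cis_turn t ^ m" for t
  have split: "complex_of_real (poisson_kernel2 (half_torus x) \<zeta>) * char2 n m x = A (fst x) * B (snd x)" for x
    by (simp add: A_def B_def poisson_kernel2_eq half_torus_def char2_def)
  have cont: "continuous_on UNIV A" "continuous_on UNIV B"
    unfolding A_def B_def
    by (intro continuous_intros continuous_on_disc_poisson_kernel_half_circle unit continuous_on_id)+
  have "norm (A s) \<le> 3" "norm (B s) \<le> 3" for s
    using disc_poisson_kernel_bounds[OF unit(1) norm_half_circle[of s]]
      disc_poisson_kernel_bounds[OF unit(2) norm_half_circle[of s]]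
    by (simp_all add: A_def B_def norm_mult norm_power)
  hence "norm (A (fst x) * B (snd x)) \<le> 3 * 3" for x
    unfolding norm_mult by (intro mult_mono) auto
  hence "integrable unit_square_measure (\<lambda>x. A (fst x) * B (snd x))"
    by (intro integrable_unit_square_bounded_continuous continuous_intros
        continuous_on_compose2[OF cont(1)] continuous_on_compose2[OF cont(2)]) auto
  hence "integral\<^sup>L unit_square_measure (\<lambda>x. A (fst x) * B (snd x))
      = integral\<^sup>L unit_interval_measure A * integral\<^sup>L unit_interval_measure B"
    using integrable_unit_interval_continuous[OF cont(1)] integrable_unit_interval_continuous[OF cont(2)]
    by (simp add: unit_square.integral_fst'[symmetric])
  also have "\<dots> = (1/2) ^ (n + m) * (cnj (fst \<zeta>) ^ n * snd \<zeta> ^ m)"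
    unfolding A_def B_def
    using integral_disc_poisson_kernel_cnj_cis_turn_power[OF unit(1) assms(2)]
      integral_disc_poisson_kernel_cis_turn_power[OF unit(2) assms(3)]
    by (simp add: power_add)
  finally show ?thesis by (simp add: split)
qed

lemma holomorphic2_on_imp_holomorphic_on_line:
  assumes "holomorphic2_on f S" and "\<And>w. w \<in> U \<Longrightarrow> (a + w * c, b + w * d) \<in> S"
  shows "(\<lambda>w. f (a + w * c, b + w * d)) holomorphic_on U"
  unfolding holomorphic_on_def
proof
  fix w assume "w \<in> U"
  then obtain L where deriv: "(f has_derivative L) (at (a + w * c, b + w * d))"
    and lin: "\<And>k x y. L (k * x, k * y) = k * L (x, y)"
    using assms(1,2) unfolding holomorphic2_on_def by blast
  have "((\<lambda>w. (a + w * c, b + w * d)) has_derivative (\<lambda>h. (h * c, h * d))) (at w)"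
    by (intro derivative_eq_intros) auto
  note has_derivative_compose[OF this deriv]
  moreover have "(\<lambda>h. L (h * c, h * d)) = (*) (L (c, d))"
    by (simp add: fun_eq_iff lin mult.commute)
  ultimately have "((\<lambda>w. f (a + w * c, b + w * d)) has_field_derivative L (c, d)) (at w)"
    by (simp add: has_field_derivative_def)
  thus "(\<lambda>w. f (a + w * c, b + w * d)) field_differentiable at w within U"
    using field_differentiable_def has_field_derivative_at_within by blast
qed

lemma holomorphic2_on_bidisc_slices:
  assumes "holomorphic2_on f bidisc" and "norm a < 1"
  shows "(\<lambda>w. f (a, w)) holomorphic_on ball 0 1" and "(\<lambda>w. f (w, a)) holomorphic_on ball 0 1"
  using holomorphic2_on_imp_holomorphic_on_line[OF assms(1), of "ball 0 1" a 0 0 1]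
    holomorphic2_on_imp_holomorphic_on_line[OF assms(1), of "ball 0 1" 0 1 a 0]
    assms(2) by (auto simp: bidisc_def)

lemma holomorphic2_on_imp_continuous_on:
  assumes "holomorphic2_on f S"
  shows "continuous_on S f"
proof (rule continuous_at_imp_continuous_on, rule ballI)
  fix z assume "z \<in> S"
  then obtain L where "(f has_derivative L) (at z)"
    using assms unfolding holomorphic2_on_def by blast
  thus "isCont f z" by (rule has_derivative_continuous)
qed

lemma holomorphic2_on_bidisc_half_torus:
  assumes "holomorphic2_on f bidisc"
  shows "continuous_on UNIV (\<lambda>x. f (half_torus x))" and "\<exists>B. \<forall>x. norm (f (half_torus x)) \<le> B"
proof -
  have cont: "continuous_on bidisc f"
    using assms by (rule holomorphic2_on_imp_continuous_on)
  show "continuous_on UNIV (\<lambda>x. f (half_torus x))"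
    by (rule continuous_on_compose2[OF cont]) (auto intro: continuous_intros half_torus_in_bidisc)
  have "compact (f ` (sphere 0 (1/2) \<times> sphere 0 (1/2)))"
    by (intro compact_continuous_image continuous_on_subset[OF cont] compact_Times compact_sphere)
      (auto simp: bidisc_def)
  then obtain B where "\<forall>y \<in> f ` (sphere 0 (1/2) \<times> sphere 0 (1/2)). norm y \<le> B"
    using compact_imp_bounded bounded_iff by metis
  moreover have "half_torus x \<in> sphere 0 (1/2) \<times> sphere 0 (1/2)" for x
    by (simp add: half_torus_def)
  ultimately show "\<exists>B. \<forall>x. norm (f (half_torus x)) \<le> B"
    by blast
qed

lemma integrable_holomorphic2_half_torus_char2:
  assumes hol: "holomorphic2_on f bidisc"
  shows "integrable unit_square_measure (\<lambda>x. f (half_torus x) * char2 n m x)"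
    and "integrable unit_square_measure (\<lambda>x. cnj (f (half_torus x)) * char2 n m x)"
proof -
  obtain B where "\<And>x. norm (f (half_torus x)) \<le> B"
    using holomorphic2_on_bidisc_half_torus(2)[OF hol] by blast
  thus "integrable unit_square_measure (\<lambda>x. f (half_torus x) * char2 n m x)"
    "integrable unit_square_measure (\<lambda>x. cnj (f (half_torus x)) * char2 n m x)"
    by (intro integrable_unit_square_bounded_continuous[where B = B] continuous_intros
        holomorphic2_on_bidisc_half_torus(1)[OF hol] continuous_on_id; simp add: norm_mult)+
qed

lemma integral_holomorphic2_half_torus_char2:
  assumes hol: "holomorphic2_on f bidisc" and "m \<ge> 1"
  shows "integral\<^sup>L unit_square_measure (\<lambda>x. f (half_torus x) * char2 n m x) = 0"
proof -
  have "integral\<^sup>L unit_square_measure (\<lambda>x. f (half_torus x) * char2 n m x)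
      = (\<integral>s. cnj (cis_turn s) ^ n *
           (\<integral>t. f (half_circle s, half_circle t) * cis_turn t ^ m \<partial>unit_interval_measure) \<partial>unit_interval_measure)"
    using integrable_holomorphic2_half_torus_char2(1)[OF hol]
    by (simp add: unit_square.integral_fst'[symmetric] half_torus_def char2_def mult.left_commute)
  also have "\<dots> = 0"
    using integral_holomorphic_times_cis_turn_power[OF
        holomorphic2_on_bidisc_slices(1)[OF hol, of "half_circle _"] assms(2)]
    by simp
  finally show ?thesis .
qed

lemma integral_cnj_holomorphic2_half_torus_char2:
  assumes hol: "holomorphic2_on f bidisc" and "n \<ge> 1"
  shows "integral\<^sup>L unit_square_measure (\<lambda>x. cnj (f (half_torus x)) * char2 n m x) = 0"
proof -
  have "integral\<^sup>L unit_square_measure (\<lambda>x. cnj (f (half_torus x)) * char2 n m x)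
      = (\<integral>t. cis_turn t ^ m *
           (\<integral>s. cnj (f (half_circle s, half_circle t)) * cnj (cis_turn s) ^ n \<partial>unit_interval_measure)
         \<partial>unit_interval_measure)"
    using unit_square.integral_snd[of "\<lambda>s t. cnj (f (half_circle s, half_circle t)) * char2 n m (s, t)"]
      integrable_holomorphic2_half_torus_char2(2)[OF hol]
    by (simp add: case_prod_beta' half_torus_def char2_def mult.left_commute mult.commute)
  also have "\<dots> = 0"
  proof -
    have "(\<integral>s. cnj (f (half_circle s, half_circle t)) * cnj (cis_turn s) ^ n \<partial>unit_interval_measure) = 0" for t
      using integral_holomorphic_times_cis_turn_power[OF
          holomorphic2_on_bidisc_slices(2)[OF hol, of "half_circle t"] assms(2)]
        Bochner_Integration.integral_cnj[of unit_interval_measure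
          "\<lambda>s. f (half_circle s, half_circle t) * cis_turn s ^ n"]
      by simp
    thus ?thesis by simp
  qed
  finally show ?thesis .
qed

lemma integral_Re_holomorphic2_half_torus_char2:
  assumes hol: "holomorphic2_on f bidisc" and "n \<ge> 1" and "m \<ge> 1"
  shows "integral\<^sup>L unit_square_measure (\<lambda>x. complex_of_real (Re (f (half_torus x))) * char2 n m x) = 0"
proof -
  note integrable_holomorphic2_half_torus_char2[OF hol]
  moreover have eq: "complex_of_real (Re (f (half_torus x))) * char2 n m x
      = (f (half_torus x) * char2 n m x + cnj (f (half_torus x)) * char2 n m x) / 2" for x
    by (simp only: distrib_right[symmetric] complex_add_cnj) simp
  ultimately have "integral\<^sup>L unit_square_measure (\<lambda>x. complex_of_real (Re (f (half_torus x))) * char2 n m x)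
      = (integral\<^sup>L unit_square_measure (\<lambda>x. f (half_torus x) * char2 n m x)
         + integral\<^sup>L unit_square_measure (\<lambda>x. cnj (f (half_torus x)) * char2 n m x)) / 2"
    unfolding eq by (simp del: complex_cnj_mult)
  thus ?thesis
    using integral_holomorphic2_half_torus_char2[OF hol assms(3), of n]
      integral_cnj_holomorphic2_half_torus_char2[OF hol assms(2), of m]
    by simp
qed

lemma closed_torus2: "closed torus2"
proof -
  have "torus2 = (\<lambda>z. (cmod (fst z), cmod (snd z))) -` {(1, 1)}"
    by (auto simp: torus2_def)
  moreover have "continuous_on UNIV (\<lambda>z::complex \<times> complex. (cmod (fst z), cmod (snd z)))"
    by (intro continuous_intros)
  ultimately show ?thesis
    using closed_vimage[of "{(1::real, 1::real)}"] by (metis closed_singleton)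
qed

lemma measurable_torus2 [measurable]: "torus2 \<in> sets borel"
  using closed_torus2 by (rule borel_closed)

lemma poisson_kernel2_half_torus_bounds:
  assumes "\<zeta> \<in> torus2"
  shows "0 \<le> poisson_kernel2 (half_torus x) \<zeta>" and "poisson_kernel2 (half_torus x) \<zeta> \<le> 9"
proof -
  have "norm (fst \<zeta>) = 1" "norm (snd \<zeta>) = 1"
    using assms by (auto simp: torus2_def)
  note bounds = disc_poisson_kernel_bounds[OF this(1) norm_half_circle[of "fst x"]]
    disc_poisson_kernel_bounds[OF this(2) norm_half_circle[of "snd x"]]
  show "0 \<le> poisson_kernel2 (half_torus x) \<zeta>"
    using bounds by (simp add: poisson_kernel2_eq half_torus_def)
  have "poisson_kernel2 (half_torus x) \<zeta> \<le> 3 * 3"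
    unfolding poisson_kernel2_eq half_torus_def using bounds by (intro mult_mono) auto
  thus "poisson_kernel2 (half_torus x) \<zeta> \<le> 9" by simp
qed

lemma borel_measurable_poisson_kernel2: "poisson_kernel2 z \<in> borel_measurable borel"
  unfolding poisson_kernel2_def
  by (intro borel_measurable_times borel_measurable_divide borel_measurable_continuous_onI continuous_intros)

lemma borel_measurable_poisson_kernel2_half_torus:
  "(\<lambda>p. indicator torus2 (fst p) * poisson_kernel2 (half_torus (snd p)) (fst p)) \<in> borel_measurable borel"
proof -
  have "(\<lambda>p. indicator torus2 (fst p) :: real) \<in> borel_measurable borel"
    by (rule measurable_compose[OF borel_measurable_continuous_onI borel_measurable_indicator])
      (intro continuous_intros, rule measurable_torus2)
  thus ?thesis
    unfolding poisson_kernel2_def half_torus_def fst_conv snd_conv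
    by (intro borel_measurable_times[OF \<open>_ \<in> borel_measurable borel\<close>] borel_measurable_times
        borel_measurable_divide borel_measurable_continuous_onI continuous_intros)
qed

lemma integral_poisson_integral2_char2:
  assumes sets: "sets M = sets borel" and "finite_measure M" and torus: "AE \<zeta> in M. \<zeta> \<in> torus2"
    and "n \<ge> 1" and "m \<ge> 1"
  shows "integral\<^sup>L unit_square_measure (\<lambda>x. complex_of_real (poisson_integral2 M (half_torus x)) * char2 n m x)
         = (1/2) ^ (n + m) * (\<integral>\<zeta>. cnj (fst \<zeta>) ^ n * snd \<zeta> ^ m \<partial>M)"
proof -
  interpret M: finite_measure M by fact
  interpret P: pair_sigma_finite M unit_square_measure
    by unfold_locales
  interpret P: finite_measure "M \<Otimes>\<^sub>M unit_square_measure"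
    by (intro finite_measure_pair_measure M.finite_measure_axioms unit_square.finite_measure_axioms)
  define Q where "Q \<zeta> x = indicator torus2 \<zeta> * poisson_kernel2 (half_torus x) \<zeta>" for \<zeta> x
  define K where "K \<zeta> x = complex_of_real (Q \<zeta> x) * char2 n m x" for \<zeta> x
  have Q_bound: "norm (Q \<zeta> x) \<le> 9" for \<zeta> x
    using poisson_kernel2_half_torus_bounds[of \<zeta> x] by (auto simp: Q_def indicator_def)
  have sets_pair: "sets (M \<Otimes>\<^sub>M unit_square_measure) = sets borel"
    by (rule sets_pair_measure_borel[OF sets sets_unit_square_measure])
  have measurable_Q: "(\<lambda>p. Q (fst p) (snd p)) \<in> borel_measurable borel"
    unfolding Q_def by (rule borel_measurable_poisson_kernel2_half_torus)
  have "(\<lambda>p. K (fst p) (snd p)) \<in> borel_measurable borel"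
    unfolding K_def
    by (intro borel_measurable_times[OF measurable_compose[OF measurable_Q borel_measurable_of_real]]
        borel_measurable_continuous_onI continuous_intros)
  hence "case_prod K \<in> borel_measurable (M \<Otimes>\<^sub>M unit_square_measure)"
    by (simp add: case_prod_beta' measurable_cong_sets[OF sets_pair refl])
  hence "integrable (M \<Otimes>\<^sub>M unit_square_measure) (case_prod K)"
    by (rule P.integrable_const_bound[where B = 9, rotated]) (use Q_bound in \<open>auto simp: K_def norm_mult\<close>)
  hence "(\<integral>x. (\<integral>\<zeta>. K \<zeta> x \<partial>M) \<partial>unit_square_measure) = (\<integral>\<zeta>. (\<integral>x. K \<zeta> x \<partial>unit_square_measure) \<partial>M)"
    by (rule P.Fubini_integral)
  moreover have "(\<integral>\<zeta>. K \<zeta> x \<partial>M) = complex_of_real (poisson_integral2 M (half_torus x)) * char2 n m x" for x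
  proof -
    have "(\<lambda>\<zeta>. (\<zeta>, x)) \<in> borel_measurable borel"
      by (intro borel_measurable_continuous_onI continuous_intros)
    from measurable_compose[OF this measurable_Q]
    have measurable_Qx: "(\<lambda>\<zeta>. Q \<zeta> x) \<in> borel_measurable M"
      by (simp add: measurable_cong_sets[OF sets refl])
    hence "integrable M (\<lambda>\<zeta>. Q \<zeta> x)"
      by (intro M.integrable_const_bound[where B = 9]) (use Q_bound in auto)
    moreover have "(\<integral>\<zeta>. Q \<zeta> x \<partial>M) = poisson_integral2 M (half_torus x)"
      unfolding poisson_integral2_def
    proof (rule integral_cong_AE[OF measurable_Qx])
      show "poisson_kernel2 (half_torus x) \<in> borel_measurable M"
        using borel_measurable_poisson_kernel2 by (simp add: measurable_cong_sets[OF sets refl])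
      show "AE \<zeta> in M. Q \<zeta> x = poisson_kernel2 (half_torus x) \<zeta>"
        using torus by eventually_elim (simp add: Q_def)
    qed
    ultimately show ?thesis
      by (simp add: K_def)
  qed
  moreover have "(\<integral>x. K \<zeta> x \<partial>unit_square_measure)
      = (1/2) ^ (n + m) * (indicator torus2 \<zeta> * (cnj (fst \<zeta>) ^ n * snd \<zeta> ^ m))" for \<zeta>
    using integral_poisson_kernel2_char2[of \<zeta> n m] assms(4,5)
    by (cases "\<zeta> \<in> torus2") (simp_all add: K_def Q_def)
  moreover have "(\<integral>\<zeta>. indicator torus2 \<zeta> * (cnj (fst \<zeta>) ^ n * snd \<zeta> ^ m) \<partial>M)
      = (\<integral>\<zeta>. cnj (fst \<zeta>) ^ n * snd \<zeta> ^ m \<partial>M)"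
  proof (rule integral_cong_AE)
    have "(\<lambda>\<zeta>::complex \<times> complex. cnj (fst \<zeta>) ^ n * snd \<zeta> ^ m) \<in> borel_measurable borel"
      by (intro borel_measurable_continuous_onI continuous_intros)
    thus measurable: "(\<lambda>\<zeta>. cnj (fst \<zeta>) ^ n * snd \<zeta> ^ m) \<in> borel_measurable M"
      by (simp add: measurable_cong_sets[OF sets refl])
    show "(\<lambda>\<zeta>. indicator torus2 \<zeta> * (cnj (fst \<zeta>) ^ n * snd \<zeta> ^ m)) \<in> borel_measurable M"
      using sets by (intro borel_measurable_times[OF borel_measurable_indicator measurable]) simp
  qed (use torus in auto)
  ultimately show ?thesis
    by simp
qed

lemma integral_cnj_fst_power_snd_power_pos_RP_measure:
  assumes "pos_RP_measure M" and "n \<ge> 1" and "m \<ge> 1"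
  shows "(\<integral>\<zeta>. cnj (fst \<zeta>) ^ n * snd \<zeta> ^ m \<partial>M) = 0"
proof -
  obtain f where hol: "holomorphic2_on f bidisc"
    and re: "\<And>z. z \<in> bidisc \<Longrightarrow> poisson_integral2 M z = Re (f z)"
    using assms(1) unfolding pos_RP_measure_def by blast
  have "AE \<zeta> in M. \<zeta> \<in> torus2"
  proof (rule AE_I')
    show "- torus2 \<in> null_sets M"
      using assms(1) by (auto simp: pos_RP_measure_def null_sets_def)
  qed auto
  moreover have "sets M = sets borel" and "finite_measure M"
    using assms(1) by (auto simp: pos_RP_measure_def)
  ultimately have "(1/2) ^ (n + m) * (\<integral>\<zeta>. cnj (fst \<zeta>) ^ n * snd \<zeta> ^ m \<partial>M)
      = integral\<^sup>L unit_square_measure (\<lambda>x. complex_of_real (poisson_integral2 M (half_torus x)) * char2 n m x)"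
    using integral_poisson_integral2_char2 assms(2,3) by simp
  also have "\<dots> = integral\<^sup>L unit_square_measure (\<lambda>x. complex_of_real (Re (f (half_torus x))) * char2 n m x)"
    by (simp add: re half_torus_in_bidisc)
  also have "\<dots> = 0"
    using integral_Re_holomorphic2_half_torus_char2[OF hol assms(2,3)] .
  finally show ?thesis by simp
qed

lemma AE_in_measure_support:
  assumes "sets M = sets borel"
  shows "AE x in M. x \<in> measure_support M"
proof -
  define F where "F = {U. open U \<and> emeasure M U = 0}"
  obtain F' where F': "F' \<subseteq> F" "countable F'" "\<Union>F' = \<Union>F"
    using Lindelof[of F] unfolding F_def by blast
  have "(\<Union>U\<in>F'. U) \<in> null_sets M"
    using F' assms by (intro null_sets_UN') (auto simp: F_def null_sets_def)
  moreover have "{x \<in> space M. x \<notin> measure_support M} \<subseteq> (\<Union>U\<in>F'. U)"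
    using F'(3) by (auto simp: measure_support_def F_def)
  ultimately show ?thesis
    by (rule AE_I')
qed

lemma S_set_subset_torus2: "S_set n m \<theta> w \<subseteq> torus2"
  by (auto simp: S_set_def Phi_def torus2_def)

lemma S'_set_subset_S_set: "S'_set n \<theta> w \<subseteq> S_set n 1 \<theta> w"
proof
  fix x assume "x \<in> S'_set n \<theta> w"
  then obtain v \<omega> where "x = Phi (v, - (\<omega> - of_int n * v))" and "\<omega> \<in> {\<theta> - w .. \<theta> + w}"
    unfolding S'_set_def by auto
  moreover have "exp (\<i> * complex_of_real (of_int n * v + of_int 1 * (\<omega> - of_int n * v)))
      = exp (\<i> * complex_of_real \<omega>)"
    by simp
  ultimately show "x \<in> S_set n 1 \<theta> w"
    unfolding S_set_def by blast
qed

lemma cos_le_Re_on_S_set: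
  assumes "\<zeta> \<in> S_set n m \<theta> w" and "n \<ge> 0" and "m \<ge> 0" and "w \<le> pi"
  shows "cos w \<le> Re (cis \<theta> * (cnj (fst \<zeta>) ^ nat n * snd \<zeta> ^ nat m))"
proof -
  obtain v1 v2 \<omega> where \<zeta>: "\<zeta> = Phi (v1, - v2)" and \<omega>: "\<omega> \<in> {\<theta> - w .. \<theta> + w}"
    and phase: "exp (\<i> * complex_of_real (of_int n * v1 + of_int m * v2)) = exp (\<i> * complex_of_real \<omega>)"
    using assms(1) unfolding S_set_def by blast
  have "cnj (fst \<zeta>) ^ nat n * snd \<zeta> ^ nat m = cnj (cis v1 ^ nat n * cis v2 ^ nat m)"
    unfolding \<zeta> Phi_def fst_conv snd_conv cis_conv_exp[symmetric] by (simp add: cis_cnj)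
  also have "cis v1 ^ nat n * cis v2 ^ nat m = cis (of_int n * v1 + of_int m * v2)"
    using assms(2,3) by (simp add: Complex.DeMoivre cis_mult)
  also have "\<dots> = cis \<omega>"
    using phase by (simp add: cis_conv_exp mult.commute)
  finally have "Re (cis \<theta> * (cnj (fst \<zeta>) ^ nat n * snd \<zeta> ^ nat m)) = cos \<bar>\<theta> - \<omega>\<bar>"
    by (simp add: cis_cnj cis_mult)
  also have "cos w \<le> cos \<bar>\<theta> - \<omega>\<bar>"
    using \<omega> assms(4) by (intro cos_monotone_0_pi_le) auto
  finally show ?thesis .
qed

lemma emeasure_space_eq_0_if_support_subset_S_set:
  fixes n m :: int
  assumes sets: "sets M = sets borel" and "finite_measure M"
    and support: "measure_support M \<subseteq> S_set n m \<theta> w"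
    and coefficient: "(\<integral>\<zeta>. cnj (fst \<zeta>) ^ nat n * snd \<zeta> ^ nat m \<partial>M) = 0"
    and "0 \<le> n" and "0 \<le> m" and "0 \<le> w" and "w < pi / 2"
  shows "emeasure M (space M) = 0"
proof -
  interpret finite_measure M by fact
  define X where "X \<zeta> = cnj (fst \<zeta>) ^ nat n * snd \<zeta> ^ nat m" for \<zeta> :: "complex \<times> complex"
  have in_S: "AE \<zeta> in M. \<zeta> \<in> S_set n m \<theta> w"
    using AE_in_measure_support[OF sets] support by auto
  have "X \<in> borel_measurable borel"
    unfolding X_def by (intro borel_measurable_continuous_onI continuous_intros)
  hence "X \<in> borel_measurable M"
    by (simp add: measurable_cong_sets[OF sets refl])
  moreover have "AE \<zeta> in M. norm (X \<zeta>) \<le> 1"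
    using in_S
  proof eventually_elim
    fix \<zeta> assume "\<zeta> \<in> S_set n m \<theta> w"
    hence "\<zeta> \<in> torus2"
      using S_set_subset_torus2 by blast
    hence "norm (fst \<zeta>) = 1" "norm (snd \<zeta>) = 1"
      by (simp_all add: torus2_def)
    thus "norm (X \<zeta>) \<le> 1"
      by (simp add: X_def norm_mult norm_power)
  qed
  ultimately have "integrable M X"
    by (intro integrable_const_bound)
  have "measure M (space M) * cos w = (\<integral>\<zeta>. cos w \<partial>M)"
    by simp
  also have "\<dots> \<le> (\<integral>\<zeta>. Re (cis \<theta> * X \<zeta>) \<partial>M)"
  proof (rule integral_mono_AE)
    show "integrable M (\<lambda>\<zeta>. Re (cis \<theta> * X \<zeta>))"
      using \<open>integrable M X\<close> by (intro integrable_Re integrable_mult_right)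
    show "AE \<zeta> in M. cos w \<le> Re (cis \<theta> * X \<zeta>)"
      using in_S by eventually_elim (use assms(5-8) in \<open>auto simp only: X_def intro!: cos_le_Re_on_S_set\<close>)
  qed simp
  also have "\<dots> = Re (cis \<theta> * integral\<^sup>L M X)"
    using \<open>integrable M X\<close> by simp
  also have "\<dots> = 0"
    using coefficient by (simp add: X_def[abs_def])
  finally have "measure M (space M) * cos w \<le> 0" .
  moreover have "cos w > 0"
    using assms(7,8) by (intro cos_gt_zero_pi) auto
  ultimately have "measure M (space M) = 0"
    by (simp add: mult_le_0_iff measure_nonneg antisym)
  thus ?thesis
    by (simp add: emeasure_eq_measure)
qed

lemma pos_RP_measure_support_not_subset_S_set:
  fixes n m :: int
  assumes "pos_RP_measure M" and "emeasure M (space M) \<noteq> 0"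
    and "n \<ge> 1" and "m \<ge> 1" and "0 \<le> w" and "w < pi / 2"
  shows "\<not> measure_support M \<subseteq> S_set n m \<theta> w"
proof
  assume "measure_support M \<subseteq> S_set n m \<theta> w"
  moreover have "sets M = sets borel" and "finite_measure M"
    using assms(1) by (auto simp: pos_RP_measure_def)
  moreover have "(\<integral>\<zeta>. cnj (fst \<zeta>) ^ nat n * snd \<zeta> ^ nat m \<partial>M) = 0"
    using assms(3,4) by (intro integral_cnj_fst_power_snd_power_pos_RP_measure[OF assms(1)]) auto
  ultimately have "emeasure M (space M) = 0"
    using assms(3-6) by (intro emeasure_space_eq_0_if_support_subset_S_set) auto
  with assms(2) show False ..
qed

theorem mainTheorem8:
  fixes n m :: int and \<theta> w :: real
  assumes "n \<ge> 1" and "m \<ge> 1"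
    and "0 \<le> \<theta>" and "\<theta> < 2 * pi"
    and "0 \<le> w" and "w < pi / 2"
  shows "(\<forall>M. pos_RP_measure M \<and> emeasure M (space M) \<noteq> 0 \<longrightarrow>
            \<not> measure_support M \<subseteq> S_set n m \<theta> w)
       \<and> (\<forall>M. pos_RP_measure M \<and> emeasure M (space M) \<noteq> 0 \<longrightarrow>
            \<not> measure_support M \<subseteq> S'_set n \<theta> w)"
  using pos_RP_measure_support_not_subset_S_set[of _ n m w \<theta>]
    pos_RP_measure_support_not_subset_S_set[of _ n 1 w \<theta>] S'_set_subset_S_set[of n \<theta> w] assms
  by auto

end
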